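(* Let $N\ge3$, $p>1$, and assume $A$ satisfies $(h_0)$–$(h_2)$ and $g$ satisfies $(g_0)$–$(g_1)$ (see context). Then there exist constants $b_1,b_2>0$ such that $\mathcal J(u)\ge b_1\|u\|_W^p-b_2\|u\|_W^q$ for all $u\in X$. Hence $\mathcal J$ is bounded from below on $X$: $\mathcal J(u)\ge\alpha$ for all $u\in X$, where $\alpha=\min_{s\ge0}(b_1s^p-b_2s^q)$.
   Context: $X=W^{1,p}(\mathbb R^N)\cap L^\infty(\mathbb R^N)$, $\|u\|_W=(|\nabla u|_p^p+|u|_p^p)^{1/p}$. $A_t=\partial A/\partial t$, $a=\nabla_\xi A$, $G(x,t)=\int_0^tg(x,s)ds$, $\mathcal J(u)=\int_{\mathbb R^N}A(x,u,\nabla u)dx+\frac1p\int_{\mathbb R^N}|u|^pdx-\int_{\mathbb R^N}G(x,u)dx$. $(h_0)$ $A(\cdot,t,\xi)$ measurable for all $(t,\xi)$, $A(x,\cdot,\cdot)$ $C^1$ for a.e. $x$. $(h_1)$ there are positive continuous $\Phi_i,\phi_i:\mathbb R\to\mathbb R$, $i=0,1,2$, with, for a.e. $x$ and all $(t,\xi)$: $|A|\le\Phi_0(t)|t|^p+\phi_0(t)|\xi|^p$, $|A_t|\le\Phi_1(t)|t|^{p-1}+\phi_1(t)|\xi|^p$, $|a|\le\Phi_2(t)|t|^{p-1}+\phi_2(t)|\xi|^{p-1}$. $(h_2)$ $A(x,t,\xi)\ge\alpha_0|\xi|^p$ a.e. $x$, all $(t,\xi)$, for some $\alpha_0>0$.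 $(g_0)$ $g$ is Carathéodory. $(g_1)$ there are $1<q<p$ and $\eta\in L^{p/(p-q)}(\mathbb R^N)$ with $0\le g(x,t)t\le\eta(x)|t|^q$ a.e. $x$, all $t$. *)

theory Defs
  imports "HOL-Analysis.Analysis"
begin

text \<open>Functions on R^N are modelled on a Euclidean space 'a with DIM('a) = N,
  equipped with Lebesgue measure.\<close>

text \<open>C^infinity real-valued functions: differentiable everywhere and all partial
  derivatives are again C^infinity (greatest fixed point).\<close>
coinductive smooth_fun :: "('a::euclidean_space \<Rightarrow> real) \<Rightarrow> bool" where
  "(\<forall>x. f differentiable (at x)) \<Longrightarrow>
   (\<forall>i\<in>Basis. smooth_fun (\<lambda>x. frechet_derivative f (at x) i)) \<Longrightarrow> smooth_fun f"

definition test_fun :: "('a::euclidean_space \<Rightarrow> real) \<Rightarrow> bool" where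
  "test_fun \<phi> \<longleftrightarrow> smooth_fun \<phi> \<and> compact (closure {x. \<phi> x \<noteq> 0})"

definition in_Lp :: "real \<Rightarrow> ('a::euclidean_space \<Rightarrow> real) \<Rightarrow> bool" where
  "in_Lp p u \<longleftrightarrow> u \<in> borel_measurable lebesgue \<and>
     integrable lebesgue (\<lambda>x. \<bar>u x\<bar> powr p)"

definition in_Linf :: "('a::euclidean_space \<Rightarrow> real) \<Rightarrow> bool" where
  "in_Linf u \<longleftrightarrow> u \<in> borel_measurable lebesgue \<and> (\<exists>C. AE x in lebesgue. \<bar>u x\<bar> \<le> C)"

definition weak_gradient :: "('a::euclidean_space \<Rightarrow> real) \<Rightarrow> ('a \<Rightarrow> 'a) \<Rightarrow> bool" where
  "weak_gradient u v \<longleftrightarrow> v \<in> borel_measurable lebesgue \<and>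
     (\<forall>\<phi>. test_fun \<phi> \<longrightarrow> (\<forall>i\<in>Basis.
        integral\<^sup>L lebesgue (\<lambda>x. u x * frechet_derivative \<phi> (at x) i)
        = - integral\<^sup>L lebesgue (\<lambda>x. (v x \<bullet> i) * \<phi> x)))"

definition sobolev_W1p :: "real \<Rightarrow> ('a::euclidean_space \<Rightarrow> real) \<Rightarrow> ('a \<Rightarrow> 'a) \<Rightarrow> bool" where
  "sobolev_W1p p u v \<longleftrightarrow> in_Lp p u \<and> weak_gradient u v \<and> in_Lp p (\<lambda>x. norm (v x))"

definition W_norm :: "real \<Rightarrow> ('a::euclidean_space \<Rightarrow> real) \<Rightarrow> ('a \<Rightarrow> 'a) \<Rightarrow> real" where
  "W_norm p u v = ((\<integral>x. norm (v x) powr p \<partial>lebesgue) + (\<integral>x. \<bar>u x\<bar> powr p \<partial>lebesgue)) powr (1/p)"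

text \<open>G(x,t) = int_0^t g(x,s) ds (oriented integral).\<close>
definition primG :: "('a \<Rightarrow> real \<Rightarrow> real) \<Rightarrow> 'a \<Rightarrow> real \<Rightarrow> real" where
  "primG g x t = (LBINT s=0..t. g x s)"

definition J_functional :: "real \<Rightarrow> ('a::euclidean_space \<Rightarrow> real \<Rightarrow> 'a \<Rightarrow> real) \<Rightarrow>
    ('a \<Rightarrow> real \<Rightarrow> real) \<Rightarrow> ('a \<Rightarrow> real) \<Rightarrow> ('a \<Rightarrow> 'a) \<Rightarrow> real" where
  "J_functional p A g u v =
     (\<integral>x. A x (u x) (v x) \<partial>lebesgue) + (1/p) * (\<integral>x. \<bar>u x\<bar> powr p \<partial>lebesgue)
     - (\<integral>x. primG g x (u x) \<partial>lebesgue)"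

end

theory Submission
  imports Defs
begin

(*
  By (h2) the A-part of J dominates \<alpha>0 |\<nabla>u|_p^p; it is integrable because u is
  bounded, so \<Phi>0 and \<phi>0 are bounded on the range of u in the growth bound (h1).
  By (g1), G(x,t) \<le> \<eta>(x) |t|^q. Writing \<eta> |u|^q = |u|_p^q (a \<eta>) with a = |u|^q / |u|_p^q and
  applying Young's inequality with exponents p/q and p/(p-q) to a \<eta> gives the Hoelder-type
  bound \<integral> G(x,u) \<le> (1 + |\<eta>|_r^r) |u|_p^q, r = p/(p-q). Hence
  J(u) \<ge> min(\<alpha>0, 1/p) ||u||^p - (1 + |\<eta>|_r^r) ||u||^q, and since q < p the right-hand side,
  as a function of ||u|| \<ge> 0, is bounded below. Only continuity of A(x,.,.) is taken
  from (h0) and only the bound on |A| from (h1).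
*)

lemma abs_interval_integral_le:
  fixes f :: "real \<Rightarrow> real"
  assumes "a \<le> b" and bound: "\<And>s. a < s \<Longrightarrow> s < b \<Longrightarrow> \<bar>f s\<bar> \<le> M"
  shows "\<bar>LBINT s=a..b. f s\<bar> \<le> M * (b - a)"
proof (cases "a = b")
  case False
  then have ab: "a < b" using \<open>a \<le> b\<close> by simp
  then have "M \<ge> 0" using bound[of "(a + b) / 2"] by simp
  have "\<bar>LBINT s=a..b. f s\<bar> = \<bar>\<integral>s. indicator {a<..<b} s * f s \<partial>lborel\<bar>"
    using ab by (simp add: interval_integral_Ioo set_lebesgue_integral_def)
  also have "\<dots> \<le> (\<integral>s. \<bar>indicator {a<..<b} s * f s\<bar> \<partial>lborel)"
    by (rule integral_abs_bound)
  also have "\<dots> \<le> (\<integral>s. indicator {a<..<b} s * M \<partial>lborel)"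
  proof (intro integral_mono' integrable_mult_left)
    show "integrable lborel (indicat_real {a<..<b})"
      using ab by (simp add: integrable_indicator_iff emeasure_lborel_Ioo)
  qed (use bound \<open>M \<ge> 0\<close> in \<open>auto simp: indicator_def abs_mult\<close>)
  also have "\<dots> = M * (b - a)"
    using ab by (simp only: integral_mult_left_zero integral_indicator) simp
  finally show ?thesis .
qed simp

lemma abs_primitive_le_powr:
  fixes g :: "real \<Rightarrow> real"
  assumes q: "1 \<le> q" and growth: "\<And>s. \<bar>g s * s\<bar> \<le> e * \<bar>s\<bar> powr q"
  shows "\<bar>LBINT s=0..t. g s\<bar> \<le> e * \<bar>t\<bar> powr q"
proof -
  have "e \<ge> 0" using growth[of 1] by simp
  have bound: "\<bar>g s\<bar> \<le> e * \<bar>t\<bar> powr (q - 1)" if "s \<noteq> 0" "\<bar>s\<bar> \<le> \<bar>t\<bar>" for s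
  proof -
    have "\<bar>g s\<bar> * \<bar>s\<bar> \<le> e * \<bar>s\<bar> powr (q - 1) * \<bar>s\<bar>"
      using growth[of s] that by (simp add: abs_mult powr_diff)
    then have "\<bar>g s\<bar> \<le> e * \<bar>s\<bar> powr (q - 1)" using that by simp
    also have "\<dots> \<le> e * \<bar>t\<bar> powr (q - 1)"
      using that q \<open>e \<ge> 0\<close> by (intro mult_left_mono powr_mono2) simp_all
    finally show ?thesis .
  qed
  have powr_q: "\<bar>t\<bar> powr (q - 1) * \<bar>t\<bar> = \<bar>t\<bar> powr q"
    by (cases "t = 0") (auto simp: powr_diff)
  show ?thesis
  proof (cases "0 \<le> t")
    case True
    then have "\<bar>LBINT s=0..t. g s\<bar> \<le> e * \<bar>t\<bar> powr (q - 1) * \<bar>t\<bar>"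
      using abs_interval_integral_le[of 0 t g] bound by (simp add: zero_ereal_def)
    then show ?thesis using powr_q by (simp add: mult.assoc)
  next
    case False
    then have "\<bar>LBINT s=t..0. g s\<bar> \<le> e * \<bar>t\<bar> powr (q - 1) * \<bar>t\<bar>"
      using abs_interval_integral_le[of t 0 g] bound by (simp add: zero_ereal_def)
    then show ?thesis using powr_q
      by (simp add: interval_integral_endpoints_reverse[of 0 t] mult.assoc)
  qed
qed

lemma scaled_Youngs_inequality:
  fixes a b Y p q :: real
  assumes q: "1 < q" "q < p" and "0 < Y" "0 \<le> a" "0 \<le> b"
  shows "b * a powr q \<le> Y powr (q / p) * (a powr p / Y + b powr (p / (p - q)))"
proof -
  define c where "c = a powr q / Y powr (q / p)"
  have "1 / (p / q) + 1 / (p / (p - q)) = 1" using q by (simp add: field_simps)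
  then have "c * b \<le> c powr (p / q) / (p / q) + b powr (p / (p - q)) / (p / (p - q))"
    using assms by (intro Youngs_inequality) (simp_all add: c_def field_simps)
  also have "\<dots> \<le> c powr (p / q) + b powr (p / (p - q))"
    using assms by (intro add_mono) (auto simp: divide_le_eq intro!: mult_left_mono)
  also have "c powr (p / q) = a powr p / Y"
    using assms by (simp add: c_def powr_divide powr_powr)
  finally have "c * b \<le> a powr p / Y + b powr (p / (p - q))" .
  then have "Y powr (q / p) * (c * b) \<le> Y powr (q / p) * (a powr p / Y + b powr (p / (p - q)))"
    by (rule mult_left_mono) simp
  then show ?thesis using \<open>0 < Y\<close> by (simp add: c_def mult_ac)
qed

lemma weak_Hoelder_integral_le:
  fixes u \<eta> F :: "'a \<Rightarrow> real"
  assumes q: "1 < q" "q < p"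
    and int_u: "integrable M (\<lambda>x. \<bar>u x\<bar> powr p)"
    and int_\<eta>: "integrable M (\<lambda>x. \<bar>\<eta> x\<bar> powr (p / (p - q)))"
    and F: "AE x in M. F x \<le> \<bar>\<eta> x\<bar> * \<bar>u x\<bar> powr q"
  shows "(\<integral>x. F x \<partial>M) \<le> (1 + (\<integral>x. \<bar>\<eta> x\<bar> powr (p / (p - q)) \<partial>M)) * (\<integral>x. \<bar>u x\<bar> powr p \<partial>M) powr (q / p)"
    (is "_ \<le> (1 + ?E) * ?Y powr (q / p)")
proof (cases "?Y = 0")
  case True
  then have "AE x in M. u x = 0"
    using integral_nonneg_eq_0_iff_AE[OF int_u] by simp
  with F have "AE x in M. F x \<le> 0"
    by eventually_elim simp
  then have "(\<integral>x. F x \<partial>M) \<le> (\<integral>x. 0 \<partial>M)"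
    by (intro integral_mono_AE') simp_all
  then show ?thesis using True by simp
next
  case False
  then have "?Y > 0" by (simp add: order_less_le)
  define R where "R x = ?Y powr (q / p) * (\<bar>u x\<bar> powr p / ?Y + \<bar>\<eta> x\<bar> powr (p / (p - q)))" for x
  have "AE x in M. F x \<le> R x"
    using F
  proof eventually_elim
    case (elim x)
    have "\<bar>\<eta> x\<bar> * \<bar>u x\<bar> powr q \<le> R x"
      unfolding R_def by (rule scaled_Youngs_inequality[OF q \<open>?Y > 0\<close>]) simp_all
    with elim show ?case by linarith
  qed
  then have "(\<integral>x. F x \<partial>M) \<le> (\<integral>x. R x \<partial>M)"
    using int_u int_\<eta> by (intro integral_mono_AE') (simp_all add: R_def)
  also have "\<dots> = ?Y powr (q / p) * (?Y / ?Y + ?E)"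
    using int_u int_\<eta> by (simp add: R_def)
  finally show ?thesis using \<open>?Y > 0\<close> by (simp add: mult.commute)
qed

lemma borel_measurable_superposition:
  fixes F :: "'a::euclidean_space \<Rightarrow> 'b::{metric_space,second_countable_topology} \<Rightarrow> real"
  assumes meas: "\<And>c. (\<lambda>x. F x c) \<in> borel_measurable lebesgue"
    and cont: "AE x in lebesgue. continuous_on UNIV (F x)"
    and w: "w \<in> borel_measurable lebesgue"
  shows "(\<lambda>x. F x (w x)) \<in> borel_measurable lebesgue"
proof -
  obtain S where S: "\<And>i. simple_function lebesgue (S i)" and lim: "\<And>x. (\<lambda>i. S i x) \<longlonglongrightarrow> w x"
    using borel_measurable_implies_sequence_metric[OF w, of undefined] by auto
  have "(\<lambda>x. F x (S i x)) \<in> borel_measurable lebesgue" for i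
  proof (rule measurable_compose_countable'[OF meas])
    show "countable (S i ` space lebesgue)"
      using S[of i] by (simp add: simple_function_def countable_finite)
    show "S i \<in> lebesgue \<rightarrow>\<^sub>M count_space (S i ` space lebesgue)"
      using S[of i] unfolding simple_function_def
      by (subst measurable_count_space_eq_countable) (auto simp: countable_finite)
  qed
  then have "(\<lambda>x. lim (\<lambda>i. F x (S i x))) \<in> borel_measurable lebesgue"
    by (rule borel_measurable_lim_metric)
  moreover have "AE x in lebesgue. lim (\<lambda>i. F x (S i x)) = F x (w x)"
    using cont
  proof eventually_elim
    case (elim x)
    have "(\<lambda>i. F x (S i x)) \<longlonglongrightarrow> F x (w x)"
      by (rule continuous_on_tendsto_compose[OF elim lim]) auto
    then show ?case by (rule limI)
  qed
  ultimately show ?thesis by (rule borel_measurable_AE)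
qed

lemma integrable_superposition_growth:
  fixes A :: "'a::euclidean_space \<Rightarrow> real \<Rightarrow> 'a \<Rightarrow> real" and \<Phi> \<phi> :: "real \<Rightarrow> real"
  assumes meas: "\<And>t \<xi>. (\<lambda>x. A x t \<xi>) \<in> borel_measurable lebesgue"
    and cont: "AE x in lebesgue. continuous_on UNIV (\<lambda>z. A x (fst z) (snd z))"
    and cont_\<Phi>: "continuous_on UNIV \<Phi>" and cont_\<phi>: "continuous_on UNIV \<phi>"
    and growth: "AE x in lebesgue. \<forall>t \<xi>. \<bar>A x t \<xi>\<bar> \<le> \<Phi> t * \<bar>t\<bar> powr p + \<phi> t * norm \<xi> powr p"
    and u: "u \<in> borel_measurable lebesgue" "integrable lebesgue (\<lambda>x. \<bar>u x\<bar> powr p)"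
    and u_bounded: "AE x in lebesgue. \<bar>u x\<bar> \<le> C"
    and v: "v \<in> borel_measurable lebesgue" "integrable lebesgue (\<lambda>x. norm (v x) powr p)"
  shows "integrable lebesgue (\<lambda>x. A x (u x) (v x))"
proof -
  have "bounded (\<Phi> ` {-C..C})" "bounded (\<phi> ` {-C..C})"
    using cont_\<Phi> cont_\<phi>
    by (auto intro!: compact_imp_bounded compact_continuous_image intro: continuous_on_subset)
  then obtain B0 B1 where B0: "\<forall>t\<in>{-C..C}. \<bar>\<Phi> t\<bar> \<le> B0" and B1: "\<forall>t\<in>{-C..C}. \<bar>\<phi> t\<bar> \<le> B1"
    unfolding bounded_real by auto
  have "integrable lebesgue (\<lambda>x. B0 * \<bar>u x\<bar> powr p + B1 * norm (v x) powr p)"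
    using u v by simp
  moreover have "(\<lambda>x. A x (u x) (v x)) \<in> borel_measurable lebesgue"
    using borel_measurable_superposition[of "\<lambda>x z. A x (fst z) (snd z)" "\<lambda>x. (u x, v x)"]
      meas cont u v by simp
  moreover have "AE x in lebesgue.
      norm (A x (u x) (v x)) \<le> norm (B0 * \<bar>u x\<bar> powr p + B1 * norm (v x) powr p)"
    using growth u_bounded
  proof eventually_elim
    case (elim x)
    then have "u x \<in> {-C..C}" by auto
    then have "\<Phi> (u x) \<le> B0" "\<phi> (u x) \<le> B1" using B0 B1 by force+
    moreover have "\<bar>A x (u x) (v x)\<bar> \<le> \<Phi> (u x) * \<bar>u x\<bar> powr p + \<phi> (u x) * norm (v x) powr p"
      using elim by blast
    ultimately have "\<bar>A x (u x) (v x)\<bar> \<le> B0 * \<bar>u x\<bar> powr p + B1 * norm (v x) powr p"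
      by (smt (verit) mult_right_mono powr_ge_zero)
    then show ?case by simp
  qed
  ultimately show ?thesis
    by (rule Bochner_Integration.integrable_bound)
qed

lemma bdd_below_powr_diff:
  fixes b1 b2 p q :: real
  assumes "0 < b1" "0 < b2" "0 < q" "q < p"
  shows "bdd_below ((\<lambda>s. b1 * s powr p - b2 * s powr q) ` {0..})"
proof -
  define T where "T = (b2 / b1) powr (1 / (p - q))"
  have "- b2 * T powr q \<le> b1 * s powr p - b2 * s powr q" if "s \<ge> 0" for s
  proof (cases "s \<le> T")
    case True
    then have "b2 * s powr q \<le> b2 * T powr q"
      using that assms by (intro mult_left_mono powr_mono2) auto
    moreover have "0 \<le> b1 * s powr p" using assms by simp
    ultimately show ?thesis by linarith
  next
    case False
    have "b2 / b1 = T powr (p - q)"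
      using assms by (simp add: T_def powr_powr)
    also have "\<dots> \<le> s powr (p - q)"
      using False assms by (intro powr_mono2) (auto simp: T_def)
    finally have "b2 \<le> b1 * s powr (p - q)"
      using assms by (simp add: divide_le_eq mult.commute)
    then have "b2 * s powr q \<le> b1 * s powr (p - q) * s powr q"
      by (rule mult_right_mono) simp
    also have "\<dots> = b1 * s powr p"
      by (simp add: mult.assoc flip: powr_add)
    finally have "b2 * s powr q \<le> b1 * s powr p" .
    moreover have "0 \<le> b2 * T powr q" using assms by simp
    ultimately show ?thesis by linarith
  qed
  then show ?thesis unfolding bdd_below_def by blast
qed

lemma W_norm_powr:
  assumes "0 < p"
  shows "W_norm p u v powr p = (\<integral>x. norm (v x) powr p \<partial>lebesgue) + (\<integral>x. \<bar>u x\<bar> powr p \<partial>lebesgue)"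
  using assms by (simp add: W_norm_def powr_powr)

lemma Lp_norm_powr_le_W_norm_powr:
  assumes "0 < p" "0 \<le> q"
  shows "(\<integral>x. \<bar>u x\<bar> powr p \<partial>lebesgue) powr (q / p) \<le> W_norm p u v powr q"
proof -
  have "(\<integral>x. \<bar>u x\<bar> powr p \<partial>lebesgue) powr (q / p)
      \<le> ((\<integral>x. norm (v x) powr p \<partial>lebesgue) + (\<integral>x. \<bar>u x\<bar> powr p \<partial>lebesgue)) powr (q / p)"
    using assms by (intro powr_mono2) auto
  then show ?thesis by (simp add: W_norm_def powr_powr)
qed

lemma primG_le_powr:
  assumes q: "1 \<le> q" and g: "\<forall>t. 0 \<le> g x t * t \<and> g x t * t \<le> \<eta> x * \<bar>t\<bar> powr q"
  shows "primG g x t \<le> \<bar>\<eta> x\<bar> * \<bar>t\<bar> powr q"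
proof -
  have "primG g x t \<le> \<eta> x * \<bar>t\<bar> powr q"
    unfolding primG_def using abs_primitive_le_powr[OF q, of "g x" "\<eta> x" t] g by fastforce
  also have "\<dots> \<le> \<bar>\<eta> x\<bar> * \<bar>t\<bar> powr q"
    by (intro mult_right_mono) simp_all
  finally show ?thesis .
qed

lemma J_functional_ge_W_norm:
  fixes A :: "'a::euclidean_space \<Rightarrow> real \<Rightarrow> 'a \<Rightarrow> real" and \<Phi> \<phi> :: "real \<Rightarrow> real"
  assumes p: "1 < p" and q: "1 < q" "q < p"
    and meas: "\<And>t \<xi>. (\<lambda>x. A x t \<xi>) \<in> borel_measurable lebesgue"
    and cont: "AE x in lebesgue. continuous_on UNIV (\<lambda>z. A x (fst z) (snd z))"
    and cont_\<Phi>: "continuous_on UNIV \<Phi>" and cont_\<phi>: "continuous_on UNIV \<phi>"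
    and growth: "AE x in lebesgue. \<forall>t \<xi>. \<bar>A x t \<xi>\<bar> \<le> \<Phi> t * \<bar>t\<bar> powr p + \<phi> t * norm \<xi> powr p"
    and coercive: "AE x in lebesgue. \<forall>t \<xi>. A x t \<xi> \<ge> \<alpha>0 * norm \<xi> powr p"
    and \<eta>: "in_Lp (p / (p - q)) \<eta>"
    and g: "AE x in lebesgue. \<forall>t. 0 \<le> g x t * t \<and> g x t * t \<le> \<eta> x * \<bar>t\<bar> powr q"
    and uv: "sobolev_W1p p u v" "in_Linf u"
  shows "J_functional p A g u v \<ge> min \<alpha>0 (1 / p) * W_norm p u v powr p
           - (1 + (\<integral>x. \<bar>\<eta> x\<bar> powr (p / (p - q)) \<partial>lebesgue)) * W_norm p u v powr q"
proof -
  define V where "V = (\<integral>x. norm (v x) powr p \<partial>lebesgue)"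
  define Y where "Y = (\<integral>x. \<bar>u x\<bar> powr p \<partial>lebesgue)"
  define E where "E = (\<integral>x. \<bar>\<eta> x\<bar> powr (p / (p - q)) \<partial>lebesgue)"
  have u: "u \<in> borel_measurable lebesgue" "integrable lebesgue (\<lambda>x. \<bar>u x\<bar> powr p)"
    and v: "v \<in> borel_measurable lebesgue" "integrable lebesgue (\<lambda>x. norm (v x) powr p)"
    using uv(1) by (auto simp: sobolev_W1p_def in_Lp_def weak_gradient_def)
  obtain C where C: "AE x in lebesgue. \<bar>u x\<bar> \<le> C"
    using uv(2) by (auto simp: in_Linf_def)
  have "integrable lebesgue (\<lambda>x. A x (u x) (v x))"
    by (rule integrable_superposition_growth[OF meas cont cont_\<Phi> cont_\<phi> growth u C v])
  then have A_ge: "\<alpha>0 * V \<le> (\<integral>x. A x (u x) (v x) \<partial>lebesgue)"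
    unfolding V_def using v(2) coercive
    by (subst integral_mult_right_zero[symmetric]) (intro integral_mono_AE; auto elim: AE_mp)
  have "AE x in lebesgue. primG g x (u x) \<le> \<bar>\<eta> x\<bar> * \<bar>u x\<bar> powr q"
    using g by eventually_elim (rule primG_le_powr; use q in simp)
  then have G_le: "(\<integral>x. primG g x (u x) \<partial>lebesgue) \<le> (1 + E) * Y powr (q / p)"
    unfolding E_def Y_def using \<eta> q by (intro weak_Hoelder_integral_le u(2)) (simp_all add: in_Lp_def)
  have "min \<alpha>0 (1 / p) * W_norm p u v powr p = min \<alpha>0 (1 / p) * V + min \<alpha>0 (1 / p) * Y"
    using p by (simp add: W_norm_powr V_def Y_def distrib_left)
  also have "\<dots> \<le> \<alpha>0 * V + (1 / p) * Y"
    unfolding V_def Y_def by (intro add_mono mult_right_mono) auto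
  finally have "min \<alpha>0 (1 / p) * W_norm p u v powr p \<le> \<alpha>0 * V + (1 / p) * Y" .
  moreover have "(1 + E) * Y powr (q / p) \<le> (1 + E) * W_norm p u v powr q"
    unfolding Y_def E_def using p q by (intro mult_left_mono Lp_norm_powr_le_W_norm_powr) simp_all
  ultimately show ?thesis
    using A_ge G_le by (simp add: J_functional_def Y_def E_def)
qed

theorem proposition4p6:
  fixes p q :: real
    and A :: "'a::euclidean_space \<Rightarrow> real \<Rightarrow> 'a \<Rightarrow> real"
    and A_t :: "'a \<Rightarrow> real \<Rightarrow> 'a \<Rightarrow> real"
    and a :: "'a \<Rightarrow> real \<Rightarrow> 'a \<Rightarrow> 'a"
    and g :: "'a \<Rightarrow> real \<Rightarrow> real"
    and \<eta> :: "'a \<Rightarrow> real"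
    and \<Phi>0 \<Phi>1 \<Phi>2 \<phi>0 \<phi>1 \<phi>2 :: "real \<Rightarrow> real"
    and \<alpha>0 :: real
  assumes N: "DIM('a) \<ge> 3"
    and p: "p > 1"
    \<comment> \<open>(h0)\<close>
    and h0_meas: "\<And>t \<xi>. (\<lambda>x. A x t \<xi>) \<in> borel_measurable lebesgue"
    and h0_C1: "AE x in lebesgue.
          (\<forall>t \<xi>. ((\<lambda>z. A x (fst z) (snd z)) has_derivative
                    (\<lambda>h. A_t x t \<xi> * fst h + a x t \<xi> \<bullet> snd h)) (at (t, \<xi>)))
        \<and> continuous_on UNIV (\<lambda>z. A_t x (fst z) (snd z))
        \<and> continuous_on UNIV (\<lambda>z. a x (fst z) (snd z))"
    \<comment> \<open>(h1)\<close>
    and h1_cont: "continuous_on UNIV \<Phi>0" "continuous_on UNIV \<Phi>1" "continuous_on UNIV \<Phi>2"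
        "continuous_on UNIV \<phi>0" "continuous_on UNIV \<phi>1" "continuous_on UNIV \<phi>2"
    and h1_pos: "\<And>t. \<Phi>0 t > 0" "\<And>t. \<Phi>1 t > 0" "\<And>t. \<Phi>2 t > 0"
        "\<And>t. \<phi>0 t > 0" "\<And>t. \<phi>1 t > 0" "\<And>t. \<phi>2 t > 0"
    and h1: "AE x in lebesgue. \<forall>t \<xi>.
          \<bar>A x t \<xi>\<bar> \<le> \<Phi>0 t * \<bar>t\<bar> powr p + \<phi>0 t * norm \<xi> powr p
        \<and> \<bar>A_t x t \<xi>\<bar> \<le> \<Phi>1 t * \<bar>t\<bar> powr (p - 1) + \<phi>1 t * norm \<xi> powr p
        \<and> norm (a x t \<xi>) \<le> \<Phi>2 t * \<bar>t\<bar> powr (p - 1) + \<phi>2 t * norm \<xi> powr (p - 1)"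
    \<comment> \<open>(h2)\<close>
    and h2: "\<alpha>0 > 0" "AE x in lebesgue. \<forall>t \<xi>. A x t \<xi> \<ge> \<alpha>0 * norm \<xi> powr p"
    \<comment> \<open>(g0) Caratheodory\<close>
    and g0_meas: "\<And>t. (\<lambda>x. g x t) \<in> borel_measurable lebesgue"
    and g0_cont: "AE x in lebesgue. continuous_on UNIV (g x)"
    \<comment> \<open>(g1)\<close>
    and q: "1 < q" "q < p"
    and eta: "in_Lp (p / (p - q)) \<eta>"
    and g1: "AE x in lebesgue. \<forall>t. 0 \<le> g x t * t \<and> g x t * t \<le> \<eta> x * \<bar>t\<bar> powr q"
  shows "\<exists>b1 b2. b1 > 0 \<and> b2 > 0 \<and>
           (\<forall>u v. sobolev_W1p p u v \<and> in_Linf u \<longrightarrow>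
              J_functional p A g u v \<ge> b1 * W_norm p u v powr p - b2 * W_norm p u v powr q) \<and>
           (\<forall>u v. sobolev_W1p p u v \<and> in_Linf u \<longrightarrow>
              J_functional p A g u v \<ge> (INF s\<in>{0..}. b1 * s powr p - b2 * s powr q))"
proof -
  define b1 where "b1 = min \<alpha>0 (1 / p)"
  define b2 where "b2 = 1 + (\<integral>x. \<bar>\<eta> x\<bar> powr (p / (p - q)) \<partial>lebesgue)"
  have b: "b1 > 0" "b2 > 0"
    using h2(1) p by (simp_all add: b1_def b2_def add_pos_nonneg)
  have A_cont: "AE x in lebesgue. continuous_on UNIV (\<lambda>z. A x (fst z) (snd z))"
    using h0_C1
  proof eventually_elim
    case (elim x)
    show ?case
      by (rule has_derivative_continuous_on[where f'="\<lambda>z h. A_t x (fst z) (snd z) * fst h + a x (fst z) (snd z) \<bullet> snd h"])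
        (use elim in auto)
  qed
  have A_growth: "AE x in lebesgue. \<forall>t \<xi>. \<bar>A x t \<xi>\<bar> \<le> \<Phi>0 t * \<bar>t\<bar> powr p + \<phi>0 t * norm \<xi> powr p"
    using h1 by eventually_elim blast
  have estimate: "J_functional p A g u v \<ge> b1 * W_norm p u v powr p - b2 * W_norm p u v powr q"
    if "sobolev_W1p p u v \<and> in_Linf u" for u v
    unfolding b1_def b2_def using that
    by (intro J_functional_ge_W_norm[OF p q h0_meas A_cont h1_cont(1) h1_cont(4) A_growth h2(2) eta g1]) auto
  have bdd: "bdd_below ((\<lambda>s. b1 * s powr p - b2 * s powr q) ` {0..})"
    using b q by (intro bdd_below_powr_diff) simp_all
  have "(INF s\<in>{0..}. b1 * s powr p - b2 * s powr q) \<le> J_functional p A g u v"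
    if "sobolev_W1p p u v \<and> in_Linf u" for u v
    using cINF_lower[OF bdd, of "W_norm p u v"] estimate[OF that] by (simp add: W_norm_def)
  then show ?thesis
    using b estimate by blast
qed
end
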